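(* Let $T:\mathbb{R}^{M}\times\cdots\times\mathbb{R}^{M}\to\mathbb{R}^D$ ($N$ factors) be a real $N$-linear contraction with respect to the Euclidean norm, with coefficients $T_{i,s}$, such that either (i) $T$ is a convex combination of norm-preserving $N$-linear maps $\mathbb{R}^M\times\cdots\times\mathbb{R}^M\to\mathbb{R}^D$, or (ii) $T$ has a norm-preserving dilation. Let $\rho$ be a density operator on $\mathcal{H}_1\otimes\cdots\otimes\mathcal{H}_N$ with $\rho^{T_\tau}\ge0$ for every subset $\tau\subseteq\{1,\dots,N\}$. Then for all Hermitian operators $A^{(k)}_j$ on $\mathcal{H}_k$ ($k=1,\dots,N$, $j=1,\dots,M$), $$\sum_{i=1}^D\Big(\sum_{s}T_{i,s}\,\mathrm{tr}\big[\rho\,A^{(1)}_{s_1}\otimes\cdots\otimes A^{(N)}_{s_N}\big]\Big)^2\le\sum_{s}\mathrm{tr}\big[\rho\,(A^{(1)}_{s_1})^2\otimes\cdots\otimes(A^{(N)}_{s_N})^2\big].$$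
   Context: An $N$-linear map $T$ is written $T(a^{(1)},\dots,a^{(N)})_i=\sum_{s\in\{1,\dots,M\}^N}T_{i,s}\prod_k a^{(k)}_{s_k}$. It is a contraction if $\|T(a^{(1)},\dots,a^{(N)})\|\le\prod_k\|a^{(k)}\|$ for all $a^{(k)}\in\mathbb{R}^M$, and norm-preserving if equality always holds ($\|\cdot\|$ Euclidean). A norm-preserving dilation of $T$ is a norm-preserving $N$-linear map $\tilde T:\mathbb{R}^M\times\cdots\times\mathbb{R}^M\to\mathbb{R}^{D'}$ with $D'\ge D$ whose first $D$ output coordinates coincide with $T$. $\mathcal{H}_1,\dots,\mathcal{H}_N$ are finite-dimensional complex Hilbert spaces with fixed orthonormal bases; $\rho^{T_\tau}$ is the partial transpose on the factors in $\tau$; a density operator is positive semidefinite of trace one. *)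

theory Defs
  imports Complex_Main "HOL-Library.FuncSet"
begin

text \<open>Finite-dimensional spaces H_k = C^(d k), k < N, with their standard bases.
  A basis index of H_1 (x) ... (x) H_N is a tuple x with x k < d k for k < N
  (extensional: undefined outside {..<N}). Operators on the tensor product are
  matrices indexed by such tuples.\<close>

definition idx :: "nat \<Rightarrow> (nat \<Rightarrow> nat) \<Rightarrow> (nat \<Rightarrow> nat) set" where
  "idx N d = PiE {..<N} (\<lambda>k. {..<d k})"

definition trace_op :: "nat \<Rightarrow> (nat \<Rightarrow> nat) \<Rightarrow> ((nat \<Rightarrow> nat) \<Rightarrow> (nat \<Rightarrow> nat) \<Rightarrow> complex) \<Rightarrow> complex" where
  "trace_op N d R = (\<Sum>x\<in>idx N d. R x x)"

definition op_mult :: "nat \<Rightarrow> (nat \<Rightarrow> nat) \<Rightarrow> ((nat \<Rightarrow> nat) \<Rightarrow> (nat \<Rightarrow> nat) \<Rightarrow> complex)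
    \<Rightarrow> ((nat \<Rightarrow> nat) \<Rightarrow> (nat \<Rightarrow> nat) \<Rightarrow> complex) \<Rightarrow> ((nat \<Rightarrow> nat) \<Rightarrow> (nat \<Rightarrow> nat) \<Rightarrow> complex)" where
  "op_mult N d A B = (\<lambda>x y. \<Sum>z\<in>idx N d. A x z * B z y)"

definition tensor_op :: "nat \<Rightarrow> (nat \<Rightarrow> nat \<Rightarrow> nat \<Rightarrow> complex) \<Rightarrow> ((nat \<Rightarrow> nat) \<Rightarrow> (nat \<Rightarrow> nat) \<Rightarrow> complex)" where
  "tensor_op N B = (\<lambda>x y. \<Prod>k<N. B k (x k) (y k))"

definition partial_transpose :: "nat set \<Rightarrow> ((nat \<Rightarrow> nat) \<Rightarrow> (nat \<Rightarrow> nat) \<Rightarrow> complex) \<Rightarrow> ((nat \<Rightarrow> nat) \<Rightarrow> (nat \<Rightarrow> nat) \<Rightarrow> complex)" where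
  "partial_transpose \<tau> R = (\<lambda>x y. R (\<lambda>k. if k \<in> \<tau> then y k else x k) (\<lambda>k. if k \<in> \<tau> then x k else y k))"

definition psd_op :: "nat \<Rightarrow> (nat \<Rightarrow> nat) \<Rightarrow> ((nat \<Rightarrow> nat) \<Rightarrow> (nat \<Rightarrow> nat) \<Rightarrow> complex) \<Rightarrow> bool" where
  "psd_op N d R = (\<forall>v :: (nat \<Rightarrow> nat) \<Rightarrow> complex.
      let q = (\<Sum>x\<in>idx N d. \<Sum>y\<in>idx N d. cnj (v x) * R x y * v y) in Im q = 0 \<and> Re q \<ge> 0)"

definition density_op :: "nat \<Rightarrow> (nat \<Rightarrow> nat) \<Rightarrow> ((nat \<Rightarrow> nat) \<Rightarrow> (nat \<Rightarrow> nat) \<Rightarrow> complex) \<Rightarrow> bool" where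
  "density_op N d R = (psd_op N d R \<and> trace_op N d R = 1)"

definition hermitian_mat :: "nat \<Rightarrow> (nat \<Rightarrow> nat \<Rightarrow> complex) \<Rightarrow> bool" where
  "hermitian_mat n B = (\<forall>i<n. \<forall>j<n. B i j = cnj (B j i))"

definition mat_sq :: "nat \<Rightarrow> (nat \<Rightarrow> nat \<Rightarrow> complex) \<Rightarrow> (nat \<Rightarrow> nat \<Rightarrow> complex)" where
  "mat_sq n B = (\<lambda>i j. \<Sum>z<n. B i z * B z j)"

text \<open>Real N-linear maps (R^M)^N -> R^D given by coefficients T i s, i < D,
  s in {0..<M}^N (0-based indices).\<close>

definition multi_idx :: "nat \<Rightarrow> nat \<Rightarrow> (nat \<Rightarrow> nat) set" where
  "multi_idx N M = PiE {..<N} (\<lambda>_. {..<M})"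

definition apply_ml :: "nat \<Rightarrow> nat \<Rightarrow> (nat \<Rightarrow> (nat \<Rightarrow> nat) \<Rightarrow> real) \<Rightarrow> (nat \<Rightarrow> nat \<Rightarrow> real) \<Rightarrow> nat \<Rightarrow> real" where
  "apply_ml N M T a i = (\<Sum>s\<in>multi_idx N M. T i s * (\<Prod>k<N. a k (s k)))"

definition vnorm :: "nat \<Rightarrow> (nat \<Rightarrow> real) \<Rightarrow> real" where
  "vnorm n v = sqrt (\<Sum>i<n. (v i)^2)"

definition contraction_ml :: "nat \<Rightarrow> nat \<Rightarrow> nat \<Rightarrow> (nat \<Rightarrow> (nat \<Rightarrow> nat) \<Rightarrow> real) \<Rightarrow> bool" where
  "contraction_ml N M D T = (\<forall>a. vnorm D (apply_ml N M T a) \<le> (\<Prod>k<N. vnorm M (a k)))"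

definition norm_preserving_ml :: "nat \<Rightarrow> nat \<Rightarrow> nat \<Rightarrow> (nat \<Rightarrow> (nat \<Rightarrow> nat) \<Rightarrow> real) \<Rightarrow> bool" where
  "norm_preserving_ml N M D T = (\<forall>a. vnorm D (apply_ml N M T a) = (\<Prod>k<N. vnorm M (a k)))"

definition convex_comb_norm_preserving :: "nat \<Rightarrow> nat \<Rightarrow> nat \<Rightarrow> (nat \<Rightarrow> (nat \<Rightarrow> nat) \<Rightarrow> real) \<Rightarrow> bool" where
  "convex_comb_norm_preserving N M D T = (\<exists>(L :: nat set) w U. finite L \<and> (\<forall>l\<in>L. w l \<ge> (0::real))
      \<and> sum w L = 1 \<and> (\<forall>l\<in>L. norm_preserving_ml N M D (U l))
      \<and> (\<forall>i<D. \<forall>s\<in>multi_idx N M. T i s = (\<Sum>l\<in>L. w l * U l i s)))"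

definition has_np_dilation :: "nat \<Rightarrow> nat \<Rightarrow> nat \<Rightarrow> (nat \<Rightarrow> (nat \<Rightarrow> nat) \<Rightarrow> real) \<Rightarrow> bool" where
  "has_np_dilation N M D T = (\<exists>D' U. D' \<ge> D \<and> norm_preserving_ml N M D' U
      \<and> (\<forall>i<D. \<forall>s\<in>multi_idx N M. U i s = T i s))"

end

theory Submission
  imports Defs
begin

text \<open>
  Fix a norm-preserving U and a set \<sigma> of tensor factors, and let B be the partial transpose on \<sigma>
  of the Hermitian operator O_i = \<Sum>_s U_{i,s} A_{s_1} \<otimes> ... \<otimes> A_{s_N}. Since \<rho>^{T_\<sigma>} is a
  density operator, the variance inequality gives tr(\<rho>^{T_\<sigma>} B)^2 \<le> tr(\<rho>^{T_\<sigma>} B^2), and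
  tr(\<rho>^{T_\<sigma>} B) = tr(\<rho> O_i) is the i-th component of U applied to the expectation values.
  Summed over i and over all 2^N sets \<sigma>, the right-hand sides become \<Sum>_{p,q} c_{p,q} tr(\<rho> A_p A_q),
  where c_{p,q} adds up the Gram coefficients \<Sum>_i U_{i,p'} U_{i,q'} over all ways p', q' of
  exchanging entries between p and q. Polarizing |U(a_1,...,a_N)|^2 = \<Prod>_k |a_k|^2 in every
  argument shows c_{p,q} = 2^N \<delta>_{p,q}, which leaves 2^N \<Sum>_s tr(\<rho> A_s^2). Convex combinations
  follow by convexity of the square, dilations by discarding the extra output coordinates.
\<close>

section \<open>Multi-indices and splicing\<close>

definition splice :: "nat set \<Rightarrow> (nat \<Rightarrow> nat) \<Rightarrow> (nat \<Rightarrow> nat) \<Rightarrow> nat \<Rightarrow> nat" where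
  "splice \<sigma> x y = (\<lambda>k. if k \<in> \<sigma> then y k else x k)"

lemma splice_splice [simp]: "splice \<sigma> (splice \<sigma> x y) (splice \<sigma> y x) = x"
  by (auto simp: splice_def)

lemma splice_self [simp]: "splice \<sigma> x x = x"
  by (simp add: splice_def)

lemma apply_splice: "(\<lambda>k. if k \<in> \<sigma> then f k (y k) else f k (x k)) = (\<lambda>k. f k (splice \<sigma> x y k))"
  by (simp add: splice_def fun_eq_iff)

lemma splice_in_PiE: "x \<in> PiE I B \<Longrightarrow> y \<in> PiE I B \<Longrightarrow> splice \<sigma> x y \<in> PiE I B"
  unfolding splice_def by (auto simp: PiE_iff extensional_def)

lemma splice_in_idx: "x \<in> idx N d \<Longrightarrow> y \<in> idx N d \<Longrightarrow> splice \<sigma> x y \<in> idx N d"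
  unfolding idx_def by (rule splice_in_PiE)

lemma splice_in_multi_idx: "s \<in> multi_idx N M \<Longrightarrow> s' \<in> multi_idx N M \<Longrightarrow> splice \<sigma> s s' \<in> multi_idx N M"
  unfolding multi_idx_def by (rule splice_in_PiE)

lemma sum_sum_splice:
  assumes "\<And>x y. x \<in> S \<Longrightarrow> y \<in> S \<Longrightarrow> splice \<sigma> x y \<in> S"
  shows "(\<Sum>x\<in>S. \<Sum>y\<in>S. F x y) = (\<Sum>x\<in>S. \<Sum>y\<in>S. F (splice \<sigma> x y) (splice \<sigma> y x))"
proof -
  let ?g = "\<lambda>(x, y). (splice \<sigma> x y, splice \<sigma> y x)"
  have "(\<Sum>x\<in>S. \<Sum>y\<in>S. F x y) = (\<Sum>(x, y)\<in>S \<times> S. F x y)"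
    by (simp add: sum.cartesian_product)
  also have "\<dots> = (\<Sum>(x, y)\<in>S \<times> S. F (splice \<sigma> x y) (splice \<sigma> y x))"
    by (rule sum.reindex_bij_witness[where i = ?g and j = ?g]) (auto simp: assms)
  also have "\<dots> = (\<Sum>x\<in>S. \<Sum>y\<in>S. F (splice \<sigma> x y) (splice \<sigma> y x))"
    by (simp add: sum.cartesian_product)
  finally show ?thesis .
qed

lemma finite_multi_idx [simp]: "finite (multi_idx N M)"
  unfolding multi_idx_def by (auto intro!: finite_PiE)

lemma finite_idx [simp]: "finite (idx N d)"
  unfolding idx_def by (auto intro!: finite_PiE)

lemma PiE_lessThan_eq_iff:
  "p \<in> PiE {..<N} B \<Longrightarrow> q \<in> PiE {..<N} B' \<Longrightarrow> (\<forall>k\<in>{..<N}. p k = q k) \<longleftrightarrow> p = q"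
  by (auto simp: PiE_iff extensional_def fun_eq_iff) (metis lessThan_iff)

lemma sum_swap_outer:
  "(\<Sum>a\<in>A. \<Sum>b\<in>B. \<Sum>c\<in>C. f a b c) = (\<Sum>b\<in>B. \<Sum>c\<in>C. \<Sum>a\<in>A. f a b c)"
  by (subst sum.swap) (rule sum.cong[OF refl], rule sum.swap)

lemma sum_sum_of_bool_eq:
  assumes "finite S" "a \<in> S" "b \<in> S"
  shows "(\<Sum>p\<in>S. \<Sum>q\<in>S. F p q * of_bool (p = a \<and> q = b)) = (F a b :: 'c :: comm_semiring_1)"
proof -
  have "(\<Sum>p\<in>S. \<Sum>q\<in>S. F p q * of_bool (p = a \<and> q = b))
      = (\<Sum>p\<in>S. if p = a then \<Sum>q\<in>S. if q = b then F p q else 0 else 0)"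
    by (intro sum.cong refl) (auto intro!: sum.cong)
  then show ?thesis using assms by simp
qed

lemma prod_of_bool:
  "finite I \<Longrightarrow> (\<Prod>k\<in>I. of_bool (P k) :: 'a :: comm_semiring_1) = of_bool (\<forall>k\<in>I. P k)"
  by (induction I rule: finite_induct) auto

lemma sum_Pow_prod_if:
  fixes f g :: "'a \<Rightarrow> 'b :: comm_semiring_1"
  assumes "finite I"
  shows "(\<Sum>\<tau>\<in>Pow I. \<Prod>k\<in>I. if k \<in> \<tau> then f k else g k) = (\<Prod>k\<in>I. f k + g k)"
proof -
  have "(\<Prod>k\<in>I. if k \<in> \<tau> then f k else g k) = prod f \<tau> * prod g (I - \<tau>)" if "\<tau> \<subseteq> I" for \<tau>
    using that assms by (simp add: prod.If_cases Int_absorb1 Diff_eq)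
  then show ?thesis by (simp add: prod_add[OF assms])
qed

lemma neg_one_power_card:
  "\<tau> \<subseteq> I \<Longrightarrow> finite I \<Longrightarrow> (-1) ^ card \<tau> = (\<Prod>k\<in>I. if k \<in> \<tau> then -1 else 1 :: 'a :: comm_ring_1)"
  by (simp add: prod.If_cases Int_absorb1)

lemma sum_Pow_signed_prod_if:
  fixes f g :: "'a \<Rightarrow> 'b :: comm_ring_1"
  assumes "finite I"
  shows "(\<Sum>\<tau>\<in>Pow I. (-1) ^ card \<tau> * (\<Prod>k\<in>I. if k \<in> \<tau> then f k else g k)) = (\<Prod>k\<in>I. g k - f k)"
proof -
  have "(-1) ^ card \<tau> * (\<Prod>k\<in>I. if k \<in> \<tau> then f k else g k) = (\<Prod>k\<in>I. if k \<in> \<tau> then - f k else g k)"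
    if "\<tau> \<subseteq> I" for \<tau>
    unfolding neg_one_power_card[OF that assms] prod.distrib[symmetric] by (intro prod.cong) auto
  then have "(\<Sum>\<tau>\<in>Pow I. (-1) ^ card \<tau> * (\<Prod>k\<in>I. if k \<in> \<tau> then f k else g k))
      = (\<Sum>\<tau>\<in>Pow I. \<Prod>k\<in>I. if k \<in> \<tau> then - f k else g k)"
    by (intro sum.cong) auto
  also have "\<dots> = (\<Prod>k\<in>I. g k - f k)"
    using assms by (simp add: sum_Pow_prod_if)
  finally show ?thesis .
qed

lemma polarization_of_bool:
  "(of_bool (x = a) + of_bool (x = b)) * (of_bool (y = a) + of_bool (y = b))
   - (of_bool (x = a) - of_bool (x = b)) * (of_bool (y = a) - of_bool (y = b))
   = 2 * of_bool (x = b \<and> y = a) + 2 * (of_bool (x = a \<and> y = b) :: 'c :: comm_ring_1)"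
  by (cases "x = a"; cases "x = b"; cases "y = a"; cases "y = b") simp_all

section \<open>Polarization of norm-preserving maps\<close>

definition gram :: "nat \<Rightarrow> (nat \<Rightarrow> (nat \<Rightarrow> nat) \<Rightarrow> real) \<Rightarrow> (nat \<Rightarrow> nat) \<Rightarrow> (nat \<Rightarrow> nat) \<Rightarrow> real" where
  "gram D U p q = (\<Sum>i<D. U i p * U i q)"

lemma norm_preserving_ml_gram:
  assumes "norm_preserving_ml N M D U"
  shows "(\<Sum>p\<in>multi_idx N M. \<Sum>q\<in>multi_idx N M. gram D U p q * (\<Prod>k<N. a k (p k) * a k (q k)))
       = (\<Prod>k<N. \<Sum>j<M. (a k j)^2)"
proof -
  have "(\<Sum>p\<in>multi_idx N M. \<Sum>q\<in>multi_idx N M. gram D U p q * (\<Prod>k<N. a k (p k) * a k (q k)))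
      = (\<Sum>i<D. (apply_ml N M U a i)^2)"
    unfolding gram_def apply_ml_def power2_eq_square sum_product sum_distrib_right
    by (subst sum.swap, rule sum.cong[OF refl], subst sum.swap)
       (simp add: prod.distrib mult_ac sum_distrib_left)
  also have "\<dots> = (vnorm D (apply_ml N M U a))^2"
    by (simp add: vnorm_def sum_nonneg)
  also have "\<dots> = (\<Prod>k<N. (vnorm M (a k))^2)"
    using assms by (simp add: norm_preserving_ml_def power_mult_distrib prod_power_distrib)
  also have "\<dots> = (\<Prod>k<N. \<Sum>j<M. (a k j)^2)"
    by (simp add: vnorm_def sum_nonneg)
  finally show ?thesis .
qed

definition polarization_vec :: "nat set \<Rightarrow> (nat \<Rightarrow> nat) \<Rightarrow> (nat \<Rightarrow> nat) \<Rightarrow> nat \<Rightarrow> nat \<Rightarrow> real" where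
  "polarization_vec \<tau> s s' k j = of_bool (j = s k) + (if k \<in> \<tau> then -1 else 1) * of_bool (j = s' k)"

lemma prod_splice_indicator:
  assumes "p \<in> multi_idx N M" "q \<in> multi_idx N M" "s \<in> multi_idx N M" "s' \<in> multi_idx N M"
  shows "(\<Prod>k<N. if k \<in> \<tau> then 2 * of_bool (p k = s' k \<and> q k = s k) else 2 * of_bool (p k = s k \<and> q k = s' k))
       = (2::real) ^ N * of_bool (p = splice \<tau> s s' \<and> q = splice \<tau> s' s)"
proof -
  have "(\<forall>k\<in>{..<N}. p k = splice \<tau> s s' k \<and> q k = splice \<tau> s' s k) \<longleftrightarrow> p = splice \<tau> s s' \<and> q = splice \<tau> s' s"
    using PiE_lessThan_eq_iff[OF assms(1)[unfolded multi_idx_def]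
            splice_in_multi_idx[OF assms(3,4), unfolded multi_idx_def]]
          PiE_lessThan_eq_iff[OF assms(2)[unfolded multi_idx_def]
            splice_in_multi_idx[OF assms(4,3), unfolded multi_idx_def]]
    by blast
  moreover have "(\<Prod>k<N. if k \<in> \<tau> then 2 * of_bool (p k = s' k \<and> q k = s k) else 2 * of_bool (p k = s k \<and> q k = s' k))
      = (\<Prod>k<N. 2 * (of_bool (p k = splice \<tau> s s' k \<and> q k = splice \<tau> s' s k) :: real))"
    by (intro prod.cong refl) (simp add: splice_def)
  ultimately show ?thesis
    by (simp add: prod.distrib prod_of_bool)
qed

lemma sum_Pow_signed_polarization_products:
  assumes "p \<in> multi_idx N M" "q \<in> multi_idx N M" "s \<in> multi_idx N M" "s' \<in> multi_idx N M"
  shows "(\<Sum>\<tau>\<in>Pow {..<N}. (-1) ^ card \<tau> *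
            (\<Prod>k<N. polarization_vec \<tau> s s' k (p k) * polarization_vec \<tau> s s' k (q k)))
       = 2 ^ N * (\<Sum>\<tau>\<in>Pow {..<N}. of_bool (p = splice \<tau> s s' \<and> q = splice \<tau> s' s))"
proof -
  define plus minus :: "nat \<Rightarrow> nat \<Rightarrow> real"
    where "plus k j = of_bool (j = s k) + of_bool (j = s' k)"
      and "minus k j = of_bool (j = s k) - of_bool (j = s' k)" for k j
  have "(\<Prod>k<N. polarization_vec \<tau> s s' k (p k) * polarization_vec \<tau> s s' k (q k))
      = (\<Prod>k<N. if k \<in> \<tau> then minus k (p k) * minus k (q k) else plus k (p k) * plus k (q k))" for \<tau>
    by (intro prod.cong refl) (simp add: polarization_vec_def plus_def minus_def)
  then have "(\<Sum>\<tau>\<in>Pow {..<N}. (-1) ^ card \<tau> *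
            (\<Prod>k<N. polarization_vec \<tau> s s' k (p k) * polarization_vec \<tau> s s' k (q k)))
      = (\<Prod>k<N. plus k (p k) * plus k (q k) - minus k (p k) * minus k (q k))"
    by (simp add: sum_Pow_signed_prod_if)
  also have "\<dots> = (\<Prod>k<N. 2 * of_bool (p k = s' k \<and> q k = s k) + 2 * of_bool (p k = s k \<and> q k = s' k))"
    unfolding plus_def minus_def by (intro prod.cong refl polarization_of_bool)
  also have "\<dots> = (\<Sum>\<tau>\<in>Pow {..<N}. \<Prod>k<N. if k \<in> \<tau> then 2 * of_bool (p k = s' k \<and> q k = s k)
                                                else 2 * of_bool (p k = s k \<and> q k = s' k))"
    by (rule sum_Pow_prod_if[symmetric]) simp
  also have "\<dots> = (\<Sum>\<tau>\<in>Pow {..<N}. 2 ^ N * of_bool (p = splice \<tau> s s' \<and> q = splice \<tau> s' s))"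
    using assms by (simp add: prod_splice_indicator)
  finally show ?thesis by (simp add: sum_distrib_left)
qed

lemma sum_Pow_signed_polarization_norms:
  assumes "s \<in> multi_idx N M" "s' \<in> multi_idx N M"
  shows "(\<Sum>\<tau>\<in>Pow {..<N}. (-1) ^ card \<tau> * (\<Prod>k<N. \<Sum>j<M. (polarization_vec \<tau> s s' k j)^2))
       = 4 ^ N * of_bool (s = s')"
proof -
  have "(\<Prod>k<N. \<Sum>j<M. (polarization_vec \<tau> s s' k j)^2)
      = (\<Prod>k<N. if k \<in> \<tau> then \<Sum>j<M. (of_bool (j = s k) - of_bool (j = s' k))^2
                             else \<Sum>j<M. (of_bool (j = s k) + of_bool (j = s' k))^2)" for \<tau>
    by (intro prod.cong refl) (simp add: polarization_vec_def)
  then have "(\<Sum>\<tau>\<in>Pow {..<N}. (-1) ^ card \<tau> * (\<Prod>k<N. \<Sum>j<M. (polarization_vec \<tau> s s' k j)^2))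
      = (\<Prod>k<N. (\<Sum>j<M. (of_bool (j = s k) + of_bool (j = s' k))^2)
               - (\<Sum>j<M. (of_bool (j = s k) - of_bool (j = s' k))^2))"
    by (simp add: sum_Pow_signed_prod_if)
  also have "\<dots> = (\<Prod>k<N. 4 * of_bool (s k = s' k))"
  proof (intro prod.cong refl)
    fix k assume "k \<in> {..<N}"
    then have "s k < M" using assms(1) by (auto simp: multi_idx_def)
    have "(of_bool (j = s k) + of_bool (j = s' k))^2 - (of_bool (j = s k) - of_bool (j = s' k))^2
        = (if j = s k then 4 * of_bool (s k = s' k) else (0::real))" for j
      by (cases "j = s k"; cases "j = s' k") (simp_all add: power2_eq_square)
    then show "(\<Sum>j<M. (of_bool (j = s k) + of_bool (j = s' k))^2)
               - (\<Sum>j<M. (of_bool (j = s k) - of_bool (j = s' k))^2) = 4 * (of_bool (s k = s' k) :: real)"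
      using \<open>s k < M\<close> by (simp add: sum_subtractf[symmetric])
  qed
  also have "\<dots> = 4 ^ N * of_bool (\<forall>k\<in>{..<N}. s k = s' k)"
    by (simp add: prod.distrib prod_of_bool)
  also have "(\<forall>k\<in>{..<N}. s k = s' k) \<longleftrightarrow> s = s'"
    using assms unfolding multi_idx_def by (rule PiE_lessThan_eq_iff)
  finally show ?thesis .
qed

lemma sum_Pow_gram_splice:
  assumes np: "norm_preserving_ml N M D U"
    and s: "s \<in> multi_idx N M" and s': "s' \<in> multi_idx N M"
  shows "(\<Sum>\<tau>\<in>Pow {..<N}. gram D U (splice \<tau> s s') (splice \<tau> s' s)) = 2 ^ N * of_bool (s = s')"
proof -
  let ?S = "multi_idx N M" and ?P = "Pow {..<N}" and ?v = "\<lambda>\<tau>. polarization_vec \<tau> s s'"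
  let ?G = "gram D U"
  have "(\<Sum>\<tau>\<in>?P. ?G (splice \<tau> s s') (splice \<tau> s' s))
      = (\<Sum>\<tau>\<in>?P. \<Sum>p\<in>?S. \<Sum>q\<in>?S. ?G p q * of_bool (p = splice \<tau> s s' \<and> q = splice \<tau> s' s))"
    by (intro sum.cong refl sum_sum_of_bool_eq[symmetric]) (simp_all add: splice_in_multi_idx s s')
  also have "\<dots> = (\<Sum>p\<in>?S. \<Sum>q\<in>?S. ?G p q * (\<Sum>\<tau>\<in>?P. of_bool (p = splice \<tau> s s' \<and> q = splice \<tau> s' s)))"
    unfolding sum_distrib_left by (subst sum.swap) (rule sum.cong[OF refl], rule sum.swap)
  finally have "(2::real) ^ N * (\<Sum>\<tau>\<in>?P. ?G (splice \<tau> s s') (splice \<tau> s' s))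
      = (\<Sum>p\<in>?S. \<Sum>q\<in>?S. ?G p q * (2 ^ N * (\<Sum>\<tau>\<in>?P. of_bool (p = splice \<tau> s s' \<and> q = splice \<tau> s' s))))"
    by (simp add: sum_distrib_left mult.left_commute)
  also have "\<dots> = (\<Sum>p\<in>?S. \<Sum>q\<in>?S. ?G p q * (\<Sum>\<tau>\<in>?P. (-1) ^ card \<tau> * (\<Prod>k<N. ?v \<tau> k (p k) * ?v \<tau> k (q k))))"
    by (simp add: sum_Pow_signed_polarization_products[OF _ _ s s'])
  also have "\<dots> = (\<Sum>\<tau>\<in>?P. (-1) ^ card \<tau> *
      (\<Sum>p\<in>?S. \<Sum>q\<in>?S. ?G p q * (\<Prod>k<N. ?v \<tau> k (p k) * ?v \<tau> k (q k))))"
    by (simp add: sum_distrib_left sum.swap[of _ ?P] mult.left_commute)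
  also have "\<dots> = (\<Sum>\<tau>\<in>?P. (-1) ^ card \<tau> * (\<Prod>k<N. \<Sum>j<M. (?v \<tau> k j)^2))"
    by (simp add: norm_preserving_ml_gram[OF np])
  also have "\<dots> = 2 ^ N * 2 ^ N * of_bool (s = s')"
    by (simp add: sum_Pow_signed_polarization_norms[OF s s'] power_mult_distrib[symmetric])
  finally show ?thesis by simp
qed

section \<open>Partial transposes of tensor products\<close>

lemma partial_transpose_eq_splice:
  "partial_transpose \<sigma> R x y = R (splice \<sigma> x y) (splice \<sigma> y x)"
  by (simp add: partial_transpose_def splice_def)

lemma partial_transpose_partial_transpose [simp]:
  "partial_transpose \<sigma> (partial_transpose \<sigma> R) = R"
  by (simp add: fun_eq_iff partial_transpose_eq_splice)

lemma trace_op_partial_transpose [simp]: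
  "trace_op N d (partial_transpose \<sigma> R) = trace_op N d R"
  by (simp add: trace_op_def partial_transpose_eq_splice)

lemma trace_op_mult_partial_transpose:
  "trace_op N d (op_mult N d (partial_transpose \<sigma> X) Y) = trace_op N d (op_mult N d X (partial_transpose \<sigma> Y))"
proof -
  have "trace_op N d (op_mult N d X (partial_transpose \<sigma> Y))
      = (\<Sum>x\<in>idx N d. \<Sum>z\<in>idx N d. X x z * Y (splice \<sigma> z x) (splice \<sigma> x z))"
    by (simp add: trace_op_def op_mult_def partial_transpose_eq_splice)
  also have "\<dots> = (\<Sum>x\<in>idx N d. \<Sum>z\<in>idx N d. X (splice \<sigma> x z) (splice \<sigma> z x) * Y z x)"
    by (subst sum_sum_splice[where \<sigma> = \<sigma>]) (simp_all add: splice_in_idx)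
  also have "\<dots> = trace_op N d (op_mult N d (partial_transpose \<sigma> X) Y)"
    by (simp add: trace_op_def op_mult_def partial_transpose_eq_splice)
  finally show ?thesis ..
qed

lemma trace_op_mult_sum:
  "trace_op N d (op_mult N d R (\<lambda>x y. \<Sum>j\<in>J. F j x y)) = (\<Sum>j\<in>J. trace_op N d (op_mult N d R (F j)))"
  unfolding trace_op_def op_mult_def sum_distrib_left
  by (subst sum.swap) (rule sum.cong[OF refl], rule sum.swap)

lemma trace_op_mult_scale:
  "trace_op N d (op_mult N d R (\<lambda>x y. c * F x y)) = c * trace_op N d (op_mult N d R F)"
  unfolding trace_op_def op_mult_def by (simp add: sum_distrib_left mult_ac)

lemma op_mult_linear_comb:
  "op_mult N d (\<lambda>x y. \<Sum>s\<in>S. f s * X s x y) (\<lambda>x y. \<Sum>s'\<in>S'. g s' * Y s' x y)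
   = (\<lambda>x y. \<Sum>s\<in>S. \<Sum>s'\<in>S'. f s * g s' * op_mult N d (X s) (Y s') x y)"
proof (intro ext)
  fix x y
  have "op_mult N d (\<lambda>x y. \<Sum>s\<in>S. f s * X s x y) (\<lambda>x y. \<Sum>s'\<in>S'. g s' * Y s' x y) x y
      = (\<Sum>z\<in>idx N d. \<Sum>s\<in>S. \<Sum>s'\<in>S'. f s * g s' * (X s x z * Y s' z y))"
    by (simp add: op_mult_def sum_product mult_ac)
  also have "\<dots> = (\<Sum>s\<in>S. \<Sum>s'\<in>S'. \<Sum>z\<in>idx N d. f s * g s' * (X s x z * Y s' z y))"
    by (subst sum.swap) (rule sum.cong[OF refl], rule sum.swap)
  finally show "op_mult N d (\<lambda>x y. \<Sum>s\<in>S. f s * X s x y) (\<lambda>x y. \<Sum>s'\<in>S'. g s' * Y s' x y) x y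
      = (\<Sum>s\<in>S. \<Sum>s'\<in>S'. f s * g s' * op_mult N d (X s) (Y s') x y)"
    by (simp add: op_mult_def sum_distrib_left)
qed

definition mat_mult :: "nat \<Rightarrow> (nat \<Rightarrow> nat \<Rightarrow> complex) \<Rightarrow> (nat \<Rightarrow> nat \<Rightarrow> complex) \<Rightarrow> nat \<Rightarrow> nat \<Rightarrow> complex" where
  "mat_mult n X Y = (\<lambda>i j. \<Sum>z<n. X i z * Y z j)"

lemma op_mult_tensor_op:
  "op_mult N d (tensor_op N X) (tensor_op N Y) = tensor_op N (\<lambda>k. mat_mult (d k) (X k) (Y k))"
proof (intro ext)
  fix x y
  have "tensor_op N (\<lambda>k. mat_mult (d k) (X k) (Y k)) x y
      = (\<Sum>z\<in>PiE {..<N} (\<lambda>k. {..<d k}). \<Prod>k<N. X k (x k) (z k) * Y k (z k) (y k))"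
    unfolding tensor_op_def mat_mult_def by (rule prod_sum_PiE) auto
  then show "op_mult N d (tensor_op N X) (tensor_op N Y) x y = tensor_op N (\<lambda>k. mat_mult (d k) (X k) (Y k)) x y"
    by (simp add: op_mult_def tensor_op_def idx_def prod.distrib)
qed

lemma partial_transpose_tensor_op:
  "partial_transpose \<sigma> (tensor_op N X) = tensor_op N (\<lambda>k. if k \<in> \<sigma> then (\<lambda>i j. X k j i) else X k)"
  by (auto simp: fun_eq_iff partial_transpose_def tensor_op_def intro!: prod.cong)

lemma partial_transpose_mult_tensor_op:
  "partial_transpose \<sigma> (op_mult N d (partial_transpose \<sigma> (tensor_op N X)) (partial_transpose \<sigma> (tensor_op N Y)))
   = op_mult N d (tensor_op N (\<lambda>k. if k \<in> \<sigma> then Y k else X k)) (tensor_op N (\<lambda>k. if k \<in> \<sigma> then X k else Y k))"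
  unfolding partial_transpose_tensor_op op_mult_tensor_op
  by (rule arg_cong[where f = "tensor_op N"], rule ext) (auto simp: mat_mult_def fun_eq_iff mult.commute)

section \<open>The variance inequality\<close>

definition hermitian_op :: "nat \<Rightarrow> (nat \<Rightarrow> nat) \<Rightarrow> ((nat \<Rightarrow> nat) \<Rightarrow> (nat \<Rightarrow> nat) \<Rightarrow> complex) \<Rightarrow> bool" where
  "hermitian_op N d B \<longleftrightarrow> (\<forall>x\<in>idx N d. \<forall>y\<in>idx N d. B y x = cnj (B x y))"

lemma hermitian_op_tensor_op:
  assumes "\<forall>k<N. hermitian_mat (d k) (X k)"
  shows "hermitian_op N d (tensor_op N X)"
  unfolding hermitian_op_def tensor_op_def cnj_prod
proof (intro ballI prod.cong refl)
  fix x y k assume "x \<in> idx N d" "y \<in> idx N d" "k \<in> {..<N}"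
  then have "x k < d k" "y k < d k" "k < N"
    by (auto simp: idx_def PiE_iff)
  then show "X k (y k) (x k) = cnj (X k (x k) (y k))"
    using assms unfolding hermitian_mat_def by blast
qed

lemma hermitian_op_partial_transpose:
  assumes "hermitian_op N d B"
  shows "hermitian_op N d (partial_transpose \<sigma> B)"
  unfolding hermitian_op_def partial_transpose_eq_splice
proof (intro ballI)
  fix x y assume "x \<in> idx N d" "y \<in> idx N d"
  then show "B (splice \<sigma> y x) (splice \<sigma> x y) = cnj (B (splice \<sigma> x y) (splice \<sigma> y x))"
    using assms splice_in_idx unfolding hermitian_op_def by blast
qed

lemma psd_op_sandwich_nonneg:
  assumes "psd_op N d R"
  shows "0 \<le> Re (\<Sum>z\<in>idx N d. \<Sum>x\<in>idx N d. \<Sum>y\<in>idx N d. C z x * R x y * cnj (C z y))"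
proof -
  have "0 \<le> Re (\<Sum>x\<in>idx N d. \<Sum>y\<in>idx N d. cnj (cnj (C z x)) * R x y * cnj (C z y))" for z
    using assms[unfolded psd_op_def Let_def, THEN spec, of "\<lambda>y. cnj (C z y)"] by simp
  then have "0 \<le> Re (\<Sum>x\<in>idx N d. \<Sum>y\<in>idx N d. C z x * R x y * cnj (C z y))" for z
    by simp
  then show ?thesis
    by (subst Re_sum) (rule sum_nonneg)
qed

lemma sandwich_row_shift:
  assumes herm: "hermitian_op N d B" and z: "z \<in> idx N d"
  shows "(\<Sum>x\<in>idx N d. \<Sum>y\<in>idx N d. (B z x - (if x = z then of_real c else 0)) * R x y
            * cnj (B z y - (if y = z then of_real c else 0)))
       = (\<Sum>x\<in>idx N d. \<Sum>y\<in>idx N d. B z x * R x y * B y z) - of_real c * (\<Sum>x\<in>idx N d. B z x * R x z)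
         - of_real c * (\<Sum>y\<in>idx N d. R z y * B y z) + of_real c ^ 2 * R z z"
proof -
  let ?I = "idx N d"
  have "cnj (B z y) = B y z" if "y \<in> ?I" for y
  proof -
    have "B y z = cnj (B z y)"
      using herm z that unfolding hermitian_op_def by blast
    then show ?thesis by simp
  qed
  then have "(\<Sum>x\<in>?I. \<Sum>y\<in>?I. (B z x - (if x = z then of_real c else 0)) * R x y
            * cnj (B z y - (if y = z then of_real c else 0)))
      = (\<Sum>x\<in>?I. \<Sum>y\<in>?I. B z x * R x y * B y z
            - (if y = z then of_real c * (B z x * R x y) else 0)
            - (if x = z then of_real c * (R x y * B y z) else 0)
            + (if x = z then if y = z then of_real c ^ 2 * R x y else 0 else 0))"
    by (intro sum.cong refl) (auto simp: algebra_simps power2_eq_square)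
  moreover have "(\<Sum>x\<in>?I. \<Sum>y\<in>?I. if y = z then of_real c * (B z x * R x y) else 0)
      = of_real c * (\<Sum>x\<in>?I. B z x * R x z)"
    using z by (simp add: sum_distrib_left)
  moreover have "(\<Sum>x\<in>?I. \<Sum>y\<in>?I. if x = z then of_real c * (R x y * B y z) else 0)
      = of_real c * (\<Sum>y\<in>?I. R z y * B y z)"
    using z by (subst sum.swap) (simp add: sum_distrib_left)
  moreover have "(\<Sum>x\<in>?I. \<Sum>y\<in>?I. if x = z then if y = z then of_real c ^ 2 * R x y else 0 else 0)
      = of_real c ^ 2 * R z z"
    using z by (subst sum.swap) simp
  ultimately show ?thesis
    by (simp add: sum.distrib sum_subtractf)
qed

lemma trace_sandwich_shift:
  assumes "hermitian_op N d B"
  shows "(\<Sum>z\<in>idx N d. \<Sum>x\<in>idx N d. \<Sum>y\<in>idx N d. (B z x - (if x = z then of_real c else 0)) * R x y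
            * cnj (B z y - (if y = z then of_real c else 0)))
       = trace_op N d (op_mult N d R (op_mult N d B B)) - 2 * of_real c * trace_op N d (op_mult N d R B)
         + of_real c ^ 2 * trace_op N d R"
proof -
  let ?I = "idx N d"
  have "(\<Sum>z\<in>?I. \<Sum>x\<in>?I. \<Sum>y\<in>?I. (B z x - (if x = z then of_real c else 0)) * R x y
            * cnj (B z y - (if y = z then of_real c else 0)))
      = (\<Sum>z\<in>?I. (\<Sum>x\<in>?I. \<Sum>y\<in>?I. B z x * R x y * B y z) - of_real c * (\<Sum>x\<in>?I. B z x * R x z)
         - of_real c * (\<Sum>y\<in>?I. R z y * B y z) + of_real c ^ 2 * R z z)"
    using assms by (intro sum.cong refl sandwich_row_shift)
  also have "\<dots> = (\<Sum>z\<in>?I. \<Sum>x\<in>?I. \<Sum>y\<in>?I. B z x * R x y * B y z)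
      - of_real c * (\<Sum>z\<in>?I. \<Sum>x\<in>?I. B z x * R x z) - of_real c * (\<Sum>z\<in>?I. \<Sum>y\<in>?I. R z y * B y z)
      + of_real c ^ 2 * (\<Sum>z\<in>?I. R z z)"
    by (simp only: sum.distrib sum_subtractf sum_distrib_left)
  also have "(\<Sum>z\<in>?I. \<Sum>x\<in>?I. \<Sum>y\<in>?I. B z x * R x y * B y z) = trace_op N d (op_mult N d R (op_mult N d B B))"
    unfolding trace_op_def op_mult_def sum_distrib_left
    by (subst sum.swap) (rule sum.cong[OF refl], subst sum.swap, simp add: mult_ac)
  also have "(\<Sum>z\<in>?I. \<Sum>x\<in>?I. B z x * R x z) = trace_op N d (op_mult N d R B)"
    unfolding trace_op_def op_mult_def by (subst sum.swap) (simp add: mult_ac)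
  also have "(\<Sum>z\<in>?I. \<Sum>y\<in>?I. R z y * B y z) = trace_op N d (op_mult N d R B)"
    unfolding trace_op_def op_mult_def ..
  also have "(\<Sum>z\<in>?I. R z z) = trace_op N d R"
    unfolding trace_op_def ..
  finally show ?thesis
    by (simp add: algebra_simps)
qed

lemma psd_op_variance:
  assumes psd: "psd_op N d R" and tr: "trace_op N d R = 1" and herm: "hermitian_op N d B"
  shows "(Re (trace_op N d (op_mult N d R B)))^2 \<le> Re (trace_op N d (op_mult N d R (op_mult N d B B)))"
proof -
  define c where "c = Re (trace_op N d (op_mult N d R B))"
  have "0 \<le> Re (\<Sum>z\<in>idx N d. \<Sum>x\<in>idx N d. \<Sum>y\<in>idx N d. (B z x - (if x = z then of_real c else 0)) * R x y
            * cnj (B z y - (if y = z then of_real c else 0)))"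
    using psd by (rule psd_op_sandwich_nonneg)
  also have "\<dots> = Re (trace_op N d (op_mult N d R (op_mult N d B B))
      - 2 * of_real c * trace_op N d (op_mult N d R B) + of_real c ^ 2 * trace_op N d R)"
    by (simp only: trace_sandwich_shift[OF herm])
  also have "\<dots> = Re (trace_op N d (op_mult N d R (op_mult N d B B))) - c ^ 2"
    using tr by (simp add: c_def power2_eq_square)
  finally show ?thesis
    by (simp add: c_def)
qed

definition obs_comb :: "nat \<Rightarrow> nat \<Rightarrow> (nat \<Rightarrow> nat \<Rightarrow> nat \<Rightarrow> nat \<Rightarrow> complex) \<Rightarrow> ((nat \<Rightarrow> nat) \<Rightarrow> real)
    \<Rightarrow> (nat \<Rightarrow> nat) \<Rightarrow> (nat \<Rightarrow> nat) \<Rightarrow> complex" where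
  "obs_comb N M A t = (\<lambda>x y. \<Sum>s\<in>multi_idx N M. of_real (t s) * tensor_op N (\<lambda>k. A k (s k)) x y)"

lemma hermitian_op_obs_comb:
  assumes "\<forall>k<N. \<forall>j<M. hermitian_mat (d k) (A k j)"
  shows "hermitian_op N d (obs_comb N M A t)"
proof -
  have herm: "hermitian_op N d (tensor_op N (\<lambda>k. A k (s k)))" if "s \<in> multi_idx N M" for s
    using that assms by (intro hermitian_op_tensor_op) (auto simp: multi_idx_def)
  show ?thesis
    unfolding hermitian_op_def obs_comb_def cnj_sum
  proof (intro ballI sum.cong refl)
    fix x y s assume "x \<in> idx N d" "y \<in> idx N d" "s \<in> multi_idx N M"
    with herm have "tensor_op N (\<lambda>k. A k (s k)) y x = cnj (tensor_op N (\<lambda>k. A k (s k)) x y)"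
      unfolding hermitian_op_def by blast
    then show "of_real (t s) * tensor_op N (\<lambda>k. A k (s k)) y x
        = cnj (of_real (t s) * tensor_op N (\<lambda>k. A k (s k)) x y)"
      by simp
  qed
qed

lemma trace_op_mult_obs_comb:
  "trace_op N d (op_mult N d R (obs_comb N M A t))
   = (\<Sum>s\<in>multi_idx N M. of_real (t s) * trace_op N d (op_mult N d R (tensor_op N (\<lambda>k. A k (s k)))))"
  unfolding obs_comb_def by (simp add: trace_op_mult_sum trace_op_mult_scale)

lemma partial_transpose_square_obs_comb:
  "partial_transpose \<sigma> (op_mult N d (partial_transpose \<sigma> (obs_comb N M A t)) (partial_transpose \<sigma> (obs_comb N M A t)))
   = (\<lambda>x y. \<Sum>s\<in>multi_idx N M. \<Sum>s'\<in>multi_idx N M. of_real (t s) * of_real (t s') *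
        op_mult N d (tensor_op N (\<lambda>k. A k (splice \<sigma> s s' k))) (tensor_op N (\<lambda>k. A k (splice \<sigma> s' s k))) x y)"
proof -
  let ?A = "\<lambda>s. tensor_op N (\<lambda>k. A k (s k))"
  have "partial_transpose \<sigma> (obs_comb N M A t)
      = (\<lambda>x y. \<Sum>s\<in>multi_idx N M. of_real (t s) * partial_transpose \<sigma> (?A s) x y)"
    by (simp add: obs_comb_def partial_transpose_def)
  then have "partial_transpose \<sigma> (op_mult N d (partial_transpose \<sigma> (obs_comb N M A t)) (partial_transpose \<sigma> (obs_comb N M A t)))
      = (\<lambda>x y. \<Sum>s\<in>multi_idx N M. \<Sum>s'\<in>multi_idx N M. of_real (t s) * of_real (t s') *
          partial_transpose \<sigma> (op_mult N d (partial_transpose \<sigma> (?A s)) (partial_transpose \<sigma> (?A s'))) x y)"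
    by (simp add: op_mult_linear_comb) (simp add: partial_transpose_def)
  also have "\<dots> = (\<lambda>x y. \<Sum>s\<in>multi_idx N M. \<Sum>s'\<in>multi_idx N M. of_real (t s) * of_real (t s') *
        op_mult N d (?A (splice \<sigma> s s')) (?A (splice \<sigma> s' s)) x y)"
    unfolding partial_transpose_mult_tensor_op apply_splice ..
  finally show ?thesis .
qed

lemma trace_partial_transpose_square_obs_comb:
  "trace_op N d (op_mult N d (partial_transpose \<sigma> \<rho>)
     (op_mult N d (partial_transpose \<sigma> (obs_comb N M A t)) (partial_transpose \<sigma> (obs_comb N M A t))))
   = (\<Sum>p\<in>multi_idx N M. \<Sum>q\<in>multi_idx N M. of_real (t (splice \<sigma> p q)) * of_real (t (splice \<sigma> q p)) *
        trace_op N d (op_mult N d \<rho> (op_mult N d (tensor_op N (\<lambda>k. A k (p k))) (tensor_op N (\<lambda>k. A k (q k))))))"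
  unfolding trace_op_mult_partial_transpose partial_transpose_square_obs_comb
    trace_op_mult_sum trace_op_mult_scale
  by (subst sum_sum_splice[where \<sigma> = \<sigma>]) (simp_all add: splice_in_multi_idx)

lemma sum_Pow_trace_partial_transpose_square:
  assumes np: "norm_preserving_ml N M D U"
  shows "(\<Sum>\<sigma>\<in>Pow {..<N}. \<Sum>i<D. trace_op N d (op_mult N d (partial_transpose \<sigma> \<rho>)
            (op_mult N d (partial_transpose \<sigma> (obs_comb N M A (U i))) (partial_transpose \<sigma> (obs_comb N M A (U i))))))
       = 2 ^ N * (\<Sum>s\<in>multi_idx N M. trace_op N d (op_mult N d \<rho> (tensor_op N (\<lambda>k. mat_sq (d k) (A k (s k))))))"
proof -
  let ?S = "multi_idx N M"
  define E where "E p q = trace_op N d (op_mult N d \<rho> (op_mult N d (tensor_op N (\<lambda>k. A k (p k))) (tensor_op N (\<lambda>k. A k (q k)))))" for p q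
  have "(\<Sum>\<sigma>\<in>Pow {..<N}. \<Sum>i<D. trace_op N d (op_mult N d (partial_transpose \<sigma> \<rho>)
            (op_mult N d (partial_transpose \<sigma> (obs_comb N M A (U i))) (partial_transpose \<sigma> (obs_comb N M A (U i))))))
      = (\<Sum>\<sigma>\<in>Pow {..<N}. \<Sum>i<D. \<Sum>p\<in>?S. \<Sum>q\<in>?S. of_real (U i (splice \<sigma> p q) * U i (splice \<sigma> q p)) * E p q)"
    by (simp add: trace_partial_transpose_square_obs_comb E_def)
  also have "\<dots> = (\<Sum>p\<in>?S. \<Sum>q\<in>?S. of_real (\<Sum>\<sigma>\<in>Pow {..<N}. gram D U (splice \<sigma> p q) (splice \<sigma> q p)) * E p q)"
    by (simp add: sum_swap_outer[of _ "{..<D}"] sum_swap_outer[of _ "Pow {..<N}"] gram_def sum_distrib_right)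
  also have "\<dots> = (\<Sum>p\<in>?S. \<Sum>q\<in>?S. if q = p then 2 ^ N * E p q else 0)"
    by (intro sum.cong refl) (auto simp: sum_Pow_gram_splice[OF np])
  also have "\<dots> = 2 ^ N * (\<Sum>p\<in>?S. E p p)"
    by (simp add: sum_distrib_left)
  also have "(\<Sum>p\<in>?S. E p p) = (\<Sum>p\<in>?S. trace_op N d (op_mult N d \<rho> (tensor_op N (\<lambda>k. mat_sq (d k) (A k (p k))))))"
    by (simp add: E_def op_mult_tensor_op mat_sq_def mat_mult_def)
  finally show ?thesis .
qed

lemma norm_preserving_ml_bound:
  assumes np: "norm_preserving_ml N M D U" and dens: "density_op N d \<rho>"
    and ppt: "\<forall>\<tau>. \<tau> \<subseteq> {..<N} \<longrightarrow> psd_op N d (partial_transpose \<tau> \<rho>)"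
    and herm: "\<forall>k<N. \<forall>j<M. hermitian_mat (d k) (A k j)"
  shows "(\<Sum>i<D. (\<Sum>s\<in>multi_idx N M. U i s *
            Re (trace_op N d (op_mult N d \<rho> (tensor_op N (\<lambda>k. A k (s k))))))^2)
         \<le> (\<Sum>s\<in>multi_idx N M.
            Re (trace_op N d (op_mult N d \<rho> (tensor_op N (\<lambda>k. mat_sq (d k) (A k (s k)))))))"
proof -
  let ?B = "\<lambda>\<sigma> i. partial_transpose \<sigma> (obs_comb N M A (U i))"
  define c where "c i = (\<Sum>s\<in>multi_idx N M. U i s * Re (trace_op N d (op_mult N d \<rho> (tensor_op N (\<lambda>k. A k (s k))))))" for i
  have c_eq: "c i = Re (trace_op N d (op_mult N d (partial_transpose \<sigma> \<rho>) (?B \<sigma> i)))" for \<sigma> i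
    by (simp add: c_def trace_op_mult_partial_transpose trace_op_mult_obs_comb Re_sum)
  have variance: "(c i)^2 \<le> Re (trace_op N d (op_mult N d (partial_transpose \<sigma> \<rho>) (op_mult N d (?B \<sigma> i) (?B \<sigma> i))))"
    if "\<sigma> \<subseteq> {..<N}" for \<sigma> i
    unfolding c_eq[of i \<sigma>] using ppt that dens
    by (intro psd_op_variance hermitian_op_partial_transpose hermitian_op_obs_comb herm)
       (auto simp: density_op_def)
  have "2 ^ N * (\<Sum>i<D. (c i)^2) = (\<Sum>\<sigma>\<in>Pow {..<N}. \<Sum>i<D. (c i)^2)"
    by (simp add: card_Pow)
  also have "\<dots> \<le> (\<Sum>\<sigma>\<in>Pow {..<N}. \<Sum>i<D.
      Re (trace_op N d (op_mult N d (partial_transpose \<sigma> \<rho>) (op_mult N d (?B \<sigma> i) (?B \<sigma> i)))))"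
    using variance by (intro sum_mono) auto
  also have "\<dots> = 2 ^ N * (\<Sum>s\<in>multi_idx N M.
      Re (trace_op N d (op_mult N d \<rho> (tensor_op N (\<lambda>k. mat_sq (d k) (A k (s k)))))))"
    using arg_cong[OF sum_Pow_trace_partial_transpose_square[OF np], of Re]
    by (simp add: Re_sum)
  finally show ?thesis
    unfolding c_def by simp
qed

lemma square_convex_comb_le:
  fixes w X :: "'a \<Rightarrow> real"
  assumes "finite L" "\<forall>l\<in>L. w l \<ge> 0" "sum w L = 1"
  shows "(\<Sum>l\<in>L. w l * X l)^2 \<le> (\<Sum>l\<in>L. w l * (X l)^2)"
proof -
  define m where "m = (\<Sum>l\<in>L. w l * X l)"
  have "0 \<le> (\<Sum>l\<in>L. w l * (X l - m)^2)"
    using assms by (intro sum_nonneg) auto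
  also have "\<dots> = (\<Sum>l\<in>L. w l * (X l)^2) - 2 * m * (\<Sum>l\<in>L. w l * X l) + m^2 * sum w L"
    by (simp add: power2_diff algebra_simps sum.distrib sum_subtractf sum_distrib_left sum_distrib_right)
  also have "\<dots> = (\<Sum>l\<in>L. w l * (X l)^2) - m^2"
    using assms(3) unfolding m_def by (simp add: power2_eq_square)
  finally show ?thesis unfolding m_def by simp
qed

lemma sum_square_bound_convex_comb:
  fixes D :: nat
  assumes "finite L" "\<forall>l\<in>L. w l \<ge> 0" "sum w L = 1"
    and bound: "\<forall>l\<in>L. (\<Sum>i<D. (\<Sum>s\<in>S. U l i s * E s)^2) \<le> R"
    and T: "\<forall>i<D. \<forall>s\<in>S. T i s = (\<Sum>l\<in>L. w l * U l i s)"
  shows "(\<Sum>i<D. (\<Sum>s\<in>S. T i s * E s)^2) \<le> (R :: real)"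
proof -
  have "(\<Sum>s\<in>S. T i s * E s) = (\<Sum>l\<in>L. w l * (\<Sum>s\<in>S. U l i s * E s))" if "i < D" for i
  proof -
    have "(\<Sum>s\<in>S. T i s * E s) = (\<Sum>s\<in>S. \<Sum>l\<in>L. w l * (U l i s * E s))"
      using T that by (simp add: sum_distrib_right mult.assoc)
    also have "\<dots> = (\<Sum>l\<in>L. w l * (\<Sum>s\<in>S. U l i s * E s))"
      by (subst sum.swap) (simp add: sum_distrib_left)
    finally show ?thesis .
  qed
  then have "(\<Sum>i<D. (\<Sum>s\<in>S. T i s * E s)^2) \<le> (\<Sum>i<D. \<Sum>l\<in>L. w l * (\<Sum>s\<in>S. U l i s * E s)^2)"
    using assms(1-3) by (intro sum_mono) (simp add: square_convex_comb_le)
  also have "\<dots> = (\<Sum>l\<in>L. w l * (\<Sum>i<D. (\<Sum>s\<in>S. U l i s * E s)^2))"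
    by (subst sum.swap) (simp add: sum_distrib_left)
  also have "\<dots> \<le> (\<Sum>l\<in>L. w l * R)"
    using assms(2) bound by (intro sum_mono mult_left_mono) auto
  also have "\<dots> = R"
    using assms(3) by (simp add: sum_distrib_right[symmetric])
  finally show ?thesis .
qed

lemma sum_square_bound_dilation:
  fixes D D' :: nat
  assumes "D \<le> D'" and U: "\<forall>i<D. \<forall>s\<in>S. U i s = T i s"
    and bound: "(\<Sum>i<D'. (\<Sum>s\<in>S. U i s * E s)^2) \<le> (R :: real)"
  shows "(\<Sum>i<D. (\<Sum>s\<in>S. T i s * E s)^2) \<le> R"
proof -
  have "(\<Sum>i<D. (\<Sum>s\<in>S. T i s * E s)^2) = (\<Sum>i<D. (\<Sum>s\<in>S. U i s * E s)^2)"
    using U by (intro sum.cong refl) simp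
  also have "\<dots> \<le> (\<Sum>i<D'. (\<Sum>s\<in>S. U i s * E s)^2)"
    using \<open>D \<le> D'\<close> by (intro sum_mono2) auto
  finally show ?thesis using bound by linarith
qed

theorem corollary1:
  fixes N M D :: nat
    and T :: "nat \<Rightarrow> (nat \<Rightarrow> nat) \<Rightarrow> real"
    and d :: "nat \<Rightarrow> nat"
    and \<rho> :: "(nat \<Rightarrow> nat) \<Rightarrow> (nat \<Rightarrow> nat) \<Rightarrow> complex"
    and A :: "nat \<Rightarrow> nat \<Rightarrow> nat \<Rightarrow> nat \<Rightarrow> complex"
  assumes "contraction_ml N M D T"
    and "convex_comb_norm_preserving N M D T \<or> has_np_dilation N M D T"
    and "density_op N d \<rho>"
    and "\<forall>\<tau>. \<tau> \<subseteq> {..<N} \<longrightarrow> psd_op N d (partial_transpose \<tau> \<rho>)"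
    and "\<forall>k<N. \<forall>j<M. hermitian_mat (d k) (A k j)"
  shows "(\<Sum>i<D. (\<Sum>s\<in>multi_idx N M. T i s *
            Re (trace_op N d (op_mult N d \<rho> (tensor_op N (\<lambda>k. A k (s k))))))^2)
         \<le> (\<Sum>s\<in>multi_idx N M.
            Re (trace_op N d (op_mult N d \<rho> (tensor_op N (\<lambda>k. mat_sq (d k) (A k (s k)))))))"
proof -
  have bound: "(\<Sum>i<D'. (\<Sum>s\<in>multi_idx N M. U i s *
            Re (trace_op N d (op_mult N d \<rho> (tensor_op N (\<lambda>k. A k (s k))))))^2)
         \<le> (\<Sum>s\<in>multi_idx N M.
            Re (trace_op N d (op_mult N d \<rho> (tensor_op N (\<lambda>k. mat_sq (d k) (A k (s k)))))))"
    if "norm_preserving_ml N M D' U" for D' U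
    using that assms(3-5) by (rule norm_preserving_ml_bound)
  from assms(2) show ?thesis
  proof
    assume "convex_comb_norm_preserving N M D T"
    then obtain L :: "nat set" and w U where L: "finite L" "\<forall>l\<in>L. w l \<ge> 0" "sum w L = 1"
      and U: "\<forall>l\<in>L. norm_preserving_ml N M D (U l)"
      and T: "\<forall>i<D. \<forall>s\<in>multi_idx N M. T i s = (\<Sum>l\<in>L. w l * U l i s)"
      unfolding convex_comb_norm_preserving_def by blast
    show ?thesis
      by (rule sum_square_bound_convex_comb[OF L _ T]) (use U bound in blast)
  next
    assume "has_np_dilation N M D T"
    then obtain D' U where D': "D \<le> D'" and U: "\<forall>i<D. \<forall>s\<in>multi_idx N M. U i s = T i s"
      and np: "norm_preserving_ml N M D' U"
      unfolding has_np_dilation_def by blast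
    show ?thesis
      by (rule sum_square_bound_dilation[OF D' U bound[OF np]])
  qed
qed

end
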